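(* Let $\mathbf L\in\mathbb R_+^{n\times k}$. Let $\mathbf p\in\operatorname{relint}(\Delta_n)$ and $c\in\mathbb R_+$ be such that $\mathbf p^\top\boldsymbol\ell_t=c$ for all $t\in[k]$. Then for every $t\in[k]$, \[ \mu_{\mathcal Q^{\mathbf L}_t}(\mathbf p)\le n-\operatorname{affdim}(\mathbf L). \]
   Context: Notation: $[m]=\{1,\dots,m\}$; $\Delta_n=\{\mathbf p\in\mathbb R_+^n:\sum_i p_i=1\}$, with relative interior the points having all entries strictly positive. A loss matrix $\mathbf L\in\mathbb R_+^{n\times k}$ has columns $\boldsymbol\ell_t$; $\operatorname{affdim}(\mathbf L)$ is the dimension of the affine hull of $\{\boldsymbol\ell_1,\dots,\boldsymbol\ell_k\}$. Trigger probability set: $\mathcal Q^{\mathbf L}_t=\{\mathbf p\in\Delta_n: t\in\operatorname{argmin}_{t'\in[k]}\mathbf p^\top\boldsymbol\ell_{t'}\}$. For a convex set $\mathcal Q\subseteq\mathbb R^n$ and $\mathbf p\in\mathcal Q$, $\mathcal F_{\mathcal Q}(\mathbf p)=\{\mathbf v:\exists\epsilon_0>0,\ \mathbf p+\epsilon\mathbf v\in\mathcal Q\ \forall\epsilon\in(0,\epsilon_0)\}$ and $\mu_{\mathcal Q}(\mathbf p)=\dim(\mathcal F_{\mathcal Q}(\mathbf p)\cap(-\mathcal F_{\mathcal Q}(\mathbf p)))$. *)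

theory Defs
  imports "HOL-Analysis.Analysis"
begin

definition prob_simplex :: "(real ^ 'n) set" where
  "prob_simplex = {p. (\<forall>i. 0 \<le> p $ i) \<and> (\<Sum>i\<in>UNIV. p $ i) = 1}"

definition prob_simplex_relint :: "(real ^ 'n) set" where
  "prob_simplex_relint = {p. (\<forall>i. 0 < p $ i) \<and> (\<Sum>i\<in>UNIV. p $ i) = 1}"

definition trigger_set :: "real ^ 'k ^ 'n \<Rightarrow> 'k \<Rightarrow> (real ^ 'n) set" where
  "trigger_set L t = {p \<in> prob_simplex. \<forall>t'. p \<bullet> column t L \<le> p \<bullet> column t' L}"

definition feasible_dirs :: "('a::real_vector) set \<Rightarrow> 'a \<Rightarrow> 'a set" where
  "feasible_dirs Q p = {v. \<exists>e0>0. \<forall>e. 0 < e \<and> e < e0 \<longrightarrow> p + e *\<^sub>R v \<in> Q}"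

definition mu :: "('a::euclidean_space) set \<Rightarrow> 'a \<Rightarrow> nat" where
  "mu Q p = dim (feasible_dirs Q p \<inter> uminus ` feasible_dirs Q p)"

end

theory Submission
  imports Defs
begin

(* Let Q be the trigger set of column t and let p satisfy
   p . l_s = c for every column l_s.  Q lies in each half-space
   { x. x . (l_t - l_s) <= 0 }, whose bounding hyperplane passes through p.
   A feasible direction of Q at p therefore satisfies v . (l_t - l_s) <= 0, and a
   direction v with v and -v both feasible satisfies v . (l_t - l_s) = 0.  Hence the
   lineality space F \<inter> -F of the feasible-direction cone is orthogonal to the
   difference set D = { l_s - l_t }, whose span has dimension affdim(L).  Orthogonality
   bounds dim(F \<inter> -F) + dim D by the ambient dimension n. *)

lemma feasible_dir_in_halfspace:
  fixes Q :: "'a::real_inner set"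
  assumes Q: "Q \<subseteq> {x. x \<bullet> w \<le> \<beta>}" and p: "p \<bullet> w = \<beta>"
    and v: "v \<in> feasible_dirs Q p"
  shows "v \<bullet> w \<le> 0"
proof -
  obtain e0 where "e0 > 0" and e0: "\<And>e. 0 < e \<Longrightarrow> e < e0 \<Longrightarrow> p + e *\<^sub>R v \<in> Q"
    using v unfolding feasible_dirs_def by blast
  have "p + (e0/2) *\<^sub>R v \<in> Q" using e0 \<open>e0 > 0\<close> by simp
  hence "(p + (e0/2) *\<^sub>R v) \<bullet> w \<le> \<beta>" using Q by blast
  hence "\<beta> + (e0/2) * (v \<bullet> w) \<le> \<beta>"
    by (simp add: inner_add_left p)
  thus ?thesis using \<open>e0 > 0\<close> by (simp add: mult_le_0_iff)
qed

lemma lineality_dir_orthogonal: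
  fixes Q :: "'a::real_inner set"
  assumes Q: "Q \<subseteq> {x. x \<bullet> w \<le> \<beta>}" and p: "p \<bullet> w = \<beta>"
    and v: "v \<in> feasible_dirs Q p \<inter> uminus ` feasible_dirs Q p"
  shows "v \<bullet> w = 0"
proof -
  have "v \<in> feasible_dirs Q p" and "- v \<in> feasible_dirs Q p"
    using v by auto
  from this[THEN feasible_dir_in_halfspace[OF Q p]] show ?thesis by simp
qed

lemma dim_orthogonal_sets_le:
  fixes S D :: "'a::euclidean_space set"
  assumes orth: "\<And>v w. v \<in> S \<Longrightarrow> w \<in> D \<Longrightarrow> v \<bullet> w = 0"
  shows "dim S + dim D \<le> DIM('a)"
proof -
  let ?C = "{y \<in> UNIV. \<forall>x \<in> span D. orthogonal x y}"
  have "S \<subseteq> ?C"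
  proof safe
    fix v x assume "v \<in> S" "x \<in> span D"
    have "orthogonal v x"
      by (rule orthogonal_to_span[OF \<open>x \<in> span D\<close>])
         (use orth \<open>v \<in> S\<close> in \<open>simp add: orthogonal_def\<close>)
    thus "orthogonal x v" by (simp add: orthogonal_commute)
  qed simp
  moreover have "dim ?C + dim (span D) = dim (UNIV :: 'a set)"
    by (rule dim_subspace_orthogonal_to_vectors) auto
  ultimately show ?thesis
    using dim_subset[of S ?C] by (simp add: dim_UNIV)
qed

lemma trigger_set_in_halfspace:
  "trigger_set L t \<subseteq> {x. x \<bullet> (column t L - column s L) \<le> 0}"
  unfolding trigger_set_def by (auto simp: inner_diff_right)

theorem mainTheorem13:
  fixes L :: "real ^ 'k ^ 'n" and p :: "real ^ 'n" and c :: real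
  assumes "\<forall>i j. 0 \<le> L $ i $ j"
    and "p \<in> prob_simplex_relint"
    and "0 \<le> c"
    and "\<forall>t. p \<bullet> column t L = c"
  shows "\<forall>t. int (mu (trigger_set L t) p) \<le> int CARD('n) - aff_dim (range (\<lambda>t. column t L))"
proof
  fix t
  let ?Q = "trigger_set L t"
  let ?S = "feasible_dirs ?Q p \<inter> uminus ` feasible_dirs ?Q p"
  define D where "D = (\<lambda>x. x - column t L) ` range (\<lambda>s. column s L)"
  have aff: "aff_dim (range (\<lambda>s. column s L)) = int (dim D)"
    unfolding D_def by (rule aff_dim_eq_dim_subtract) (simp add: hull_inc)
  have "v \<bullet> w = 0" if "v \<in> ?S" and "w \<in> D" for v w
  proof -
    obtain s where w: "w = column s L - column t L" using \<open>w \<in> D\<close> unfolding D_def by auto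
    have "v \<bullet> (column t L - column s L) = 0"
      by (rule lineality_dir_orthogonal[OF trigger_set_in_halfspace _ \<open>v \<in> ?S\<close>])
         (simp add: assms(4) inner_diff_right)
    thus ?thesis unfolding w by (simp add: inner_diff_right)
  qed
  hence "dim ?S + dim D \<le> DIM(real ^ 'n)"
    by (rule dim_orthogonal_sets_le)
  thus "int (mu ?Q p) \<le> int CARD('n) - aff_dim (range (\<lambda>s. column s L))"
    unfolding aff mu_def by simp
qed

end
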